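(* Let $\Omega\subset\mathbb{R}^n$ be open, let $p:\Omega\to[1,\infty]$ be measurable with $\frac1p\in\mathcal P^{\log}(\Omega)$, and let $\omega\in A_\infty$. Then there is a constant $C$ such that for all open balls $B\subset\mathbb{R}^n$, \[\omega(B)^{\frac1{p_B^+}-\frac1{p_B^-}}\le C.\]
   Context: A weight is a nonnegative locally integrable function $\omega$ on $\mathbb{R}^n$, $\omega(E):=\int_E\omega\,dx$. For $1<q<\infty$, $\omega\in A_q$ means $\sup_B|B|^{-q}\omega(B)\big(\int_B\omega^{-q'/q}dx\big)^{q-1}<\infty$ with $1/q+1/q'=1$, supremum over open balls; $\omega\in A_1$ means $M\omega\le C\omega$ a.e. ($M$ the Hardy–Littlewood maximal operator); $A_\infty:=\bigcup_{q\in[1,\infty)}A_q$. $p_B^+:=\operatorname{ess\,sup}_{x\in B\cap\Omega}p(x)$, $p_B^-:=\operatorname{ess\,inf}_{x\in B\cap\Omega}p(x)$, with $1/\infty:=0$. $\frac1p\in\mathcal P^{\log}(\Omega)$ means: (local log-Hölder continuity) there is $c_1>0$ with $\big|\frac1{p(x)}-\frac1{p(y)}\big|\le\frac{c_1}{\log(e+1/|x-y|)}$ for all $x,y\in\Omega$; and (log-Hölder decay) there exist $p_\infty\in[1,\infty]$ and $c_2>0$ with $\big|\frac1{p(x)}-\frac1{p_\infty}\big|\le\frac{c_2}{\log(e+|x|)}$ for all $x\in\Omega$. *)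

theory Defs
  imports "HOL-Analysis.Analysis" "HOL-Probability.Essential_Supremum"
begin

definition is_weight :: "('a::euclidean_space \<Rightarrow> real) \<Rightarrow> bool" where
  "is_weight w \<longleftrightarrow> (\<forall>x. 0 \<le> w x) \<and> (\<forall>K. compact K \<longrightarrow> set_integrable lebesgue K w)"

definition wmeas :: "('a::euclidean_space \<Rightarrow> real) \<Rightarrow> 'a set \<Rightarrow> real" where
  "wmeas w E = (\<integral>x\<in>E. w x \<partial>lebesgue)"

definition HL_max :: "('a::euclidean_space \<Rightarrow> real) \<Rightarrow> 'a \<Rightarrow> ennreal" where
  "HL_max f x = (SUP cr \<in> {(c, r). 0 < r \<and> x \<in> ball c r}.
      ennreal ((\<integral>y\<in>ball (fst cr) (snd cr). \<bar>f y\<bar> \<partial>lebesgue) / measure lebesgue (ball (fst cr) (snd cr))))"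

text \<open>Muckenhoupt class A_q, 1 < q < infinity, with q' = q/(q-1), so -q'/q = -1/(q-1).\<close>
definition A_q :: "real \<Rightarrow> ('a::euclidean_space \<Rightarrow> real) \<Rightarrow> bool" where
  "A_q q w \<longleftrightarrow> is_weight w \<and>
     (\<exists>K. \<forall>c r. 0 < r \<longrightarrow>
        (let B = ball c r;
             I = (\<integral>\<^sup>+ y. indicator B y * (if w y = 0 then \<infinity> else ennreal (w y powr (- 1 / (q - 1)))) \<partial>lebesgue)
         in I < \<infinity> \<and>
            measure lebesgue B powr (- q) * wmeas w B * (enn2real I) powr (q - 1) \<le> K))"

definition A_1 :: "('a::euclidean_space \<Rightarrow> real) \<Rightarrow> bool" where
  "A_1 w \<longleftrightarrow> is_weight w \<and> (\<exists>C. AE x in lebesgue. HL_max w x \<le> ennreal (C * w x))"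

definition A_infty :: "('a::euclidean_space \<Rightarrow> real) \<Rightarrow> bool" where
  "A_infty w \<longleftrightarrow> A_1 w \<or> (\<exists>q. 1 < q \<and> A_q q w)"

definition essinf :: "'a measure \<Rightarrow> ('a \<Rightarrow> ereal) \<Rightarrow> ereal" where
  "essinf M f = Sup {z. AE x in M. z \<le> f x}"

definition p_plus :: "'a::euclidean_space set \<Rightarrow> ('a \<Rightarrow> ereal) \<Rightarrow> 'a set \<Rightarrow> ereal" where
  "p_plus \<Omega> p B = esssup (restrict_space lebesgue (B \<inter> \<Omega>)) p"

definition p_minus :: "'a::euclidean_space set \<Rightarrow> ('a \<Rightarrow> ereal) \<Rightarrow> 'a set \<Rightarrow> ereal" where
  "p_minus \<Omega> p B = essinf (restrict_space lebesgue (B \<inter> \<Omega>)) p"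

text \<open>1/t for t in [1,infinity] as a real number, with 1/infinity = 0.\<close>
definition recip :: "ereal \<Rightarrow> real" where
  "recip t = real_of_ereal (inverse t)"

definition P_log :: "'a::euclidean_space set \<Rightarrow> ('a \<Rightarrow> ereal) \<Rightarrow> bool" where
  "P_log \<Omega> p \<longleftrightarrow>
     (\<exists>c1>0. \<forall>x\<in>\<Omega>. \<forall>y\<in>\<Omega>. \<bar>recip (p x) - recip (p y)\<bar> \<le> c1 / ln (exp 1 + 1 / norm (x - y))) \<and>
     (\<exists>p_inf c2. 1 \<le> p_inf \<and> 0 < c2 \<and>
        (\<forall>x\<in>\<Omega>. \<bar>recip (p x) - recip p_inf\<bar> \<le> c2 / ln (exp 1 + norm x)))"

end

theory Submission
  imports Defs
begin

(* The exponent d = 1/p_B^- - 1/p_B^+ lies in [0,1], so only balls with w(B) < 1 matter.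
   Every A_infty weight grows polynomially, w(B(c,R)) <= K (R/r)^e w(B(c,r)) for r <= R:
   for A_1 weights because the average of w over B(c,R) is dominated by M w <= C w, for A_q
   weights by the A_q condition combined with the Hoelder bound |B|^q <= w(B) sigma(B)^(q-1).
   Since B(c, r+|c|+1) contains the unit ball, 1/w(B) <= (K / w(B(0,1))) rho^e with
   rho = (r+|c|+1)/r. Log-Hoelder continuity bounds d log rho uniformly in the ball: the local
   condition controls d log(1+1/r), and the decay condition controls d log(1+|c|) for balls far
   from the origin. Hence w(B)^(-d) <= max(1, K / w(B(0,1))) exp(e M). *)

section \<open>Reciprocal exponents and their essential bounds\<close>

(* The case t = 0 is covered because inverse (ereal 0) = \<infinity>. *)
lemma recip_le_iff:
  assumes "1 \<le> s" "0 \<le> t"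
  shows "recip s \<le> t \<longleftrightarrow> inverse (ereal t) \<le> s"
  using assms unfolding recip_def by (cases s) (auto simp: field_simps)

lemma le_recip_iff:
  assumes "1 \<le> s" "0 < t"
  shows "t \<le> recip s \<longleftrightarrow> s \<le> inverse (ereal t)"
  using assms unfolding recip_def by (cases s) (auto simp: field_simps)

lemma recip_nonneg: "1 \<le> s \<Longrightarrow> 0 \<le> recip s"
  unfolding recip_def by (cases s) auto

lemma recip_le_one: "1 \<le> s \<Longrightarrow> recip s \<le> 1"
  unfolding recip_def by (cases s) (auto simp: field_simps)

lemma recip_diff_le_one: "1 \<le> s \<Longrightarrow> 1 \<le> t \<Longrightarrow> recip s - recip t \<le> 1"
  using recip_le_one[of s] recip_nonneg[of t] by simp

lemma recip_antimono: "1 \<le> s \<Longrightarrow> s \<le> t \<Longrightarrow> recip t \<le> recip s"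
  unfolding recip_def by (cases s; cases t) (auto simp: field_simps)

lemma essinf_greatest: "(\<And>x. x \<in> space M \<Longrightarrow> c \<le> f x) \<Longrightarrow> c \<le> essinf M f"
  unfolding essinf_def by (rule Sup_upper) (auto intro: AE_I2)

lemma essinf_le_esssup:
  assumes "emeasure M (space M) \<noteq> 0"
  shows "essinf M f \<le> esssup M f"
  unfolding essinf_def
proof (rule Sup_least)
  fix z assume "z \<in> {z. AE x in M. z \<le> f x}"
  then have "AE x in M. z \<le> esssup M f"
    using esssup_AE[of f M] by (auto elim: eventually_mono intro: order.trans)
  then show "z \<le> esssup M f"
    using assms by (cases "z \<le> esssup M f") (auto simp: ae_filter_eq_bot_iff)
qed

lemma recip_essinf_le:
  assumes "\<And>x. x \<in> space M \<Longrightarrow> 1 \<le> f x" "\<And>x. x \<in> space M \<Longrightarrow> recip (f x) \<le> t" "0 \<le> t"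
  shows "recip (essinf M f) \<le> t"
proof -
  have "inverse (ereal t) \<le> f x" if "x \<in> space M" for x
    using assms that recip_le_iff by blast
  then have "inverse (ereal t) \<le> essinf M f" by (rule essinf_greatest)
  moreover have "1 \<le> essinf M f" using assms(1) by (rule essinf_greatest)
  ultimately show ?thesis using recip_le_iff assms(3) by blast
qed

lemma le_recip_esssup:
  assumes "f \<in> borel_measurable M" "emeasure M (space M) \<noteq> 0"
    and "\<And>x. x \<in> space M \<Longrightarrow> 1 \<le> f x" "\<And>x. x \<in> space M \<Longrightarrow> t \<le> recip (f x)" "0 < t"
  shows "t \<le> recip (esssup M f)"
proof -
  have "f x \<le> inverse (ereal t)" if "x \<in> space M" for x
    using assms(3-5) that le_recip_iff by blast
  then have "esssup M f \<le> inverse (ereal t)" using assms(1) by (intro esssup_I AE_I2) auto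
  moreover have "1 \<le> esssup M f"
    using essinf_greatest[of M 1 f] essinf_le_esssup[OF assms(2), of f] assms(3) by simp
  ultimately show ?thesis using le_recip_iff assms(5) by blast
qed

lemma recip_essinf_minus_recip_esssup_le:
  assumes "f \<in> borel_measurable M" "emeasure M (space M) \<noteq> 0"
    and ge1: "\<And>x. x \<in> space M \<Longrightarrow> 1 \<le> f x"
    and osc: "\<And>x y. x \<in> space M \<Longrightarrow> y \<in> space M \<Longrightarrow> recip (f x) - recip (f y) \<le> D"
  shows "recip (essinf M f) - recip (esssup M f) \<le> D"
proof -
  have "recip (essinf M f) - D \<le> recip (f y)" if y: "y \<in> space M" for y
  proof -
    have "0 \<le> D" using osc[OF y y] by simp
    moreover have "0 \<le> recip (f y)" using ge1[OF y] by (rule recip_nonneg)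
    ultimately have "recip (essinf M f) \<le> D + recip (f y)"
      using ge1 osc y by (intro recip_essinf_le) (auto simp: algebra_simps)
    then show ?thesis by simp
  qed
  moreover have "0 \<le> recip (esssup M f)"
    using essinf_greatest[of M 1 f] essinf_le_esssup[OF assms(2), of f] ge1
    by (intro recip_nonneg) simp
  ultimately show ?thesis
    using le_recip_esssup[OF assms(1,2) ge1, of "recip (essinf M f) - D"]
    by (cases "0 < recip (essinf M f) - D") auto
qed

lemma emeasure_restrict_open_nonzero:
  fixes S :: "'a::euclidean_space set"
  assumes "open S" "S \<noteq> {}"
  shows "emeasure (restrict_space lebesgue S) (space (restrict_space lebesgue S)) \<noteq> 0"
proof -
  obtain x e where "0 < e" "ball x e \<subseteq> S" using assms by (meson ex_in_conv openE)
  have "0 < emeasure lebesgue (ball x e)"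
    using content_ball_pos[OF \<open>0 < e\<close>, of x] emeasure_lborel_ball_finite[of x e]
    by (simp add: emeasure_eq_measure2 measure_completion)
  also have "\<dots> \<le> emeasure lebesgue S"
    using \<open>ball x e \<subseteq> S\<close> assms(1) by (intro emeasure_mono) auto
  finally show ?thesis
    using assms(1) by (simp add: space_restrict_space emeasure_restrict_space)
qed

lemma recip_p_plus_le_recip_p_minus:
  assumes "open \<Omega>" "\<forall>x\<in>\<Omega>. 1 \<le> p x" "open B" "B \<inter> \<Omega> \<noteq> {}"
  shows "recip (p_plus \<Omega> p B) \<le> recip (p_minus \<Omega> p B)"
proof -
  let ?M = "restrict_space lebesgue (B \<inter> \<Omega>)"
  have "1 \<le> essinf ?M p"
    using assms(1,2,3) by (intro essinf_greatest) (auto simp: space_restrict_space)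
  moreover have "essinf ?M p \<le> esssup ?M p"
    using assms by (intro essinf_le_esssup emeasure_restrict_open_nonzero) auto
  ultimately show ?thesis unfolding p_plus_def p_minus_def by (rule recip_antimono)
qed

lemma recip_p_minus_minus_recip_p_plus_le:
  assumes "open \<Omega>" "p \<in> borel_measurable (restrict_space lebesgue \<Omega>)" "\<forall>x\<in>\<Omega>. 1 \<le> p x"
    and "open B" "B \<inter> \<Omega> \<noteq> {}"
    and "\<And>x y. x \<in> B \<inter> \<Omega> \<Longrightarrow> y \<in> B \<inter> \<Omega> \<Longrightarrow> recip (p x) - recip (p y) \<le> D"
  shows "recip (p_minus \<Omega> p B) - recip (p_plus \<Omega> p B) \<le> D"
  unfolding p_plus_def p_minus_def
proof (rule recip_essinf_minus_recip_esssup_le)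
  show "p \<in> borel_measurable (restrict_space lebesgue (B \<inter> \<Omega>))"
    using assms(2) by (rule measurable_restrict_mono) auto
  show "emeasure (restrict_space lebesgue (B \<inter> \<Omega>)) (space (restrict_space lebesgue (B \<inter> \<Omega>))) \<noteq> 0"
    using assms by (intro emeasure_restrict_open_nonzero) auto
qed (use assms in \<open>auto simp: space_restrict_space\<close>)

lemma recip_p_gap_bounds:
  assumes "open \<Omega>" "p \<in> borel_measurable (restrict_space lebesgue \<Omega>)" "\<forall>x\<in>\<Omega>. 1 \<le> p x"
    and "open B" "B \<inter> \<Omega> \<noteq> {}"
    and osc: "\<And>x y. x \<in> B \<inter> \<Omega> \<Longrightarrow> y \<in> B \<inter> \<Omega> \<Longrightarrow> (recip (p x) - recip (p y)) * L \<le> M"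
    and L: "0 < L"
  shows "0 \<le> recip (p_minus \<Omega> p B) - recip (p_plus \<Omega> p B)"
    and "recip (p_minus \<Omega> p B) - recip (p_plus \<Omega> p B) \<le> 1"
    and "(recip (p_minus \<Omega> p B) - recip (p_plus \<Omega> p B)) * L \<le> M"
proof -
  show "0 \<le> recip (p_minus \<Omega> p B) - recip (p_plus \<Omega> p B)"
    using recip_p_plus_le_recip_p_minus[OF assms(1,3-5)] by simp
  show "recip (p_minus \<Omega> p B) - recip (p_plus \<Omega> p B) \<le> 1"
    using assms(3)
    by (intro recip_p_minus_minus_recip_p_plus_le[OF assms(1-5)] recip_diff_le_one) auto
  have "recip (p_minus \<Omega> p B) - recip (p_plus \<Omega> p B) \<le> M / L"
    using osc L
    by (intro recip_p_minus_minus_recip_p_plus_le[OF assms(1-5)]) (simp add: pos_le_divide_eq)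
  then show "(recip (p_minus \<Omega> p B) - recip (p_plus \<Omega> p B)) * L \<le> M"
    using L by (simp add: pos_le_divide_eq)
qed

section \<open>Polynomial growth of A_infty weights\<close>

lemma measure_lebesgue_ball:
  fixes c :: "'a::euclidean_space"
  assumes "0 \<le> r"
  shows "measure lebesgue (ball c r) = r ^ DIM('a) * measure lebesgue (ball (0::'a) 1)"
  using content_ball_conv_unit_ball[OF assms, of c] by (simp add: measure_completion)

lemma measure_lebesgue_ball_pos: "0 < r \<Longrightarrow> 0 < measure lebesgue (ball c r)"
  using content_ball_pos[of r c] by (simp add: measure_completion)

lemma emeasure_lebesgue_ball_finite: "emeasure lebesgue (ball c r) < \<infinity>"
  using emeasure_lborel_ball_finite[of c r] by (simp add: emeasure_completion less_top)

lemma measure_lebesgue_ball_ratio: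
  fixes c :: "'a::euclidean_space"
  assumes "0 < r" "r \<le> R"
  shows "measure lebesgue (ball c R) = (R / r) ^ DIM('a) * measure lebesgue (ball c r)"
  using measure_lebesgue_ball[of r c] measure_lebesgue_ball[of R c] assms
  by (simp add: power_divide)

lemma set_integrable_const_ball: "set_integrable lebesgue (ball c r) (\<lambda>_. v::real)"
  unfolding set_integrable_def using emeasure_lebesgue_ball_finite[of c r]
  by (intro integrable_indicator) auto

lemma is_weight_set_integrable_ball:
  assumes "is_weight w"
  shows "set_integrable lebesgue (ball c r) w"
proof -
  have "set_integrable lebesgue (cball c r) w" using assms unfolding is_weight_def by auto
  then show ?thesis by (rule set_integrable_subset) auto
qed

lemma wmeas_nonneg: "is_weight w \<Longrightarrow> 0 \<le> wmeas w E"
  unfolding wmeas_def is_weight_def set_lebesgue_integral_def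
  by (auto intro!: integral_nonneg_AE)

lemma wmeas_ball_mono:
  assumes "is_weight w" "ball c r \<subseteq> ball c' r'"
  shows "wmeas w (ball c r) \<le> wmeas w (ball c' r')"
  using assms is_weight_set_integrable_ball[OF assms(1)]
  unfolding wmeas_def set_lebesgue_integral_def set_integrable_def is_weight_def
  by (intro integral_mono) (auto split: split_indicator)

lemma A_infty_is_weight: "A_infty w \<Longrightarrow> is_weight w"
  unfolding A_infty_def A_1_def A_q_def by auto

definition weight_ball_growth :: "real \<Rightarrow> real \<Rightarrow> ('a::euclidean_space \<Rightarrow> real) \<Rightarrow> bool" where
  "weight_ball_growth K e w \<longleftrightarrow>
     (\<forall>c r R. 0 < r \<longrightarrow> r \<le> R \<longrightarrow> wmeas w (ball c R) \<le> K * (R / r) powr e * wmeas w (ball c r))"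

lemma weight_ball_growth_null_ball:
  assumes "is_weight w" "weight_ball_growth K e w" "0 < r" "wmeas w (ball c r) = 0"
  shows "wmeas w (ball c' r') = 0"
proof -
  define R where "R = r + \<bar>r'\<bar> + dist c c'"
  have "ball c' r' \<subseteq> ball c R"
  proof
    fix x assume "x \<in> ball c' r'"
    then show "x \<in> ball c R" using dist_triangle[of c x c'] assms(3) by (simp add: R_def)
  qed
  then have "wmeas w (ball c' r') \<le> wmeas w (ball c R)" by (rule wmeas_ball_mono[OF assms(1)])
  also have "\<dots> \<le> K * (R / r) powr e * wmeas w (ball c r)"
    using assms(2,3) unfolding weight_ball_growth_def R_def by (simp add: add_increasing2)
  also have "\<dots> = 0" using assms(4) by simp
  finally show ?thesis using wmeas_nonneg[OF assms(1)] by (simp add: order_antisym)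
qed

lemma wmeas_unit_ball_le:
  fixes w :: "'a::euclidean_space \<Rightarrow> real"
  assumes "is_weight w" "weight_ball_growth K e w" "0 < r"
  shows "wmeas w (ball 0 1) \<le> K * ((r + norm c + 1) / r) powr e * wmeas w (ball c r)"
proof -
  have "ball 0 1 \<subseteq> ball c (r + norm c + 1)"
  proof
    fix x :: 'a assume "x \<in> ball 0 1"
    then show "x \<in> ball c (r + norm c + 1)"
      using assms(3) norm_triangle_ineq4[of c x] by (simp add: dist_norm)
  qed
  then have "wmeas w (ball 0 1) \<le> wmeas w (ball c (r + norm c + 1))"
    by (rule wmeas_ball_mono[OF assms(1)])
  also have "\<dots> \<le> K * ((r + norm c + 1) / r) powr e * wmeas w (ball c r)"
    using assms(2,3) unfolding weight_ball_growth_def by simp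
  finally show ?thesis .
qed

lemma A_1_ball_average_le:
  fixes w :: "'a::euclidean_space \<Rightarrow> real"
  assumes "A_1 w"
  obtains K where "\<And>c R. 0 < R \<Longrightarrow>
           AE x in lebesgue. x \<in> ball c R \<longrightarrow> wmeas w (ball c R) / measure lebesgue (ball c R) \<le> K * w x"
proof -
  have w0: "\<And>x. 0 \<le> w x" using assms unfolding A_1_def is_weight_def by auto
  obtain C where C: "AE x in lebesgue. HL_max w x \<le> ennreal (C * w x)"
    using assms unfolding A_1_def by auto
  define K where "K = max C 0"
  have "AE x in lebesgue. x \<in> ball c R \<longrightarrow> wmeas w (ball c R) / measure lebesgue (ball c R) \<le> K * w x"
    if R: "0 < R" for c R
    using C
  proof eventually_elim
    case (elim x)
    let ?v = "wmeas w (ball c R) / measure lebesgue (ball c R)"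
    show ?case
    proof
      assume "x \<in> ball c R"
      then have "ennreal ?v \<le> HL_max w x"
        unfolding HL_max_def wmeas_def using R w0
        by (intro SUP_upper2[where i="(c, R)"]) auto
      then have "ennreal ?v \<le> ennreal (C * w x)"
        using elim by (rule order.trans)
      then have "?v \<le> max (C * w x) 0"
        by (auto simp: ennreal_le_iff2)
      also have "\<dots> \<le> K * w x"
        using w0[of x] unfolding K_def by (auto intro: mult_right_mono)
      finally show "?v \<le> K * w x" .
    qed
  qed
  then show ?thesis using that by blast
qed

lemma A_1_weight_ball_growth:
  fixes w :: "'a::euclidean_space \<Rightarrow> real"
  assumes "A_1 w"
  obtains K where "weight_ball_growth K (real DIM('a)) w"
proof -
  have W: "is_weight w" using assms unfolding A_1_def by auto
  obtain K where avg: "\<And>c R. 0 < R \<Longrightarrow>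
      AE x in lebesgue. x \<in> ball c R \<longrightarrow> wmeas w (ball c R) / measure lebesgue (ball c R) \<le> K * w x"
    using A_1_ball_average_le[OF assms] by blast
  have "wmeas w (ball c R) \<le> K * (R / r) powr real DIM('a) * wmeas w (ball c r)"
    if r: "0 < r" "r \<le> R" for c r R
  proof -
    define v where "v = wmeas w (ball c R) / measure lebesgue (ball c R)"
    have "AE x in lebesgue. x \<in> ball c r \<longrightarrow> v \<le> K * w x"
      using avg[of R c] r unfolding v_def by (auto elim!: eventually_mono)
    then have "(\<integral>x\<in>ball c r. v \<partial>lebesgue) \<le> (\<integral>x\<in>ball c r. K * w x \<partial>lebesgue)"
      using is_weight_set_integrable_ball[OF W, of c r]
      by (intro set_integral_mono_AE)
         (auto intro: set_integrable_const_ball set_integrable_mult_right)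
    then have "measure lebesgue (ball c r) * v \<le> K * wmeas w (ball c r)"
      using emeasure_lebesgue_ball_finite[of c r] by (simp add: wmeas_def set_integral_const)
    then have "(R / r) ^ DIM('a) * (measure lebesgue (ball c r) * v)
        \<le> (R / r) ^ DIM('a) * (K * wmeas w (ball c r))"
      using r by (intro mult_left_mono) auto
    moreover have "wmeas w (ball c R) = (R / r) ^ DIM('a) * (measure lebesgue (ball c r) * v)"
      using measure_lebesgue_ball_pos[of R c] measure_lebesgue_ball_ratio[OF r, of c] r
      by (simp add: v_def)
    ultimately show ?thesis using r by (simp add: powr_realpow ac_simps)
  qed
  then show ?thesis using that unfolding weight_ball_growth_def by blast
qed

definition dual_weight_integral :: "real \<Rightarrow> ('a::euclidean_space \<Rightarrow> real) \<Rightarrow> 'a set \<Rightarrow> ennreal" where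
  "dual_weight_integral q w B =
     (\<integral>\<^sup>+ y. indicator B y * (if w y = 0 then \<infinity> else ennreal (w y powr (- 1 / (q - 1)))) \<partial>lebesgue)"

lemma tangent_le_powr_neg:
  fixes a s t :: real
  assumes "0 < a" "0 < s" "0 < t"
  shows "s powr (-a) * (1 + a) - a * s powr (-a-1) * t \<le> t powr (-a)"
proof -
  define u where "u = t / s"
  have u: "0 < u" and t: "t = s * u" using assms by (simp_all add: u_def)
  have "1 - a * ln u \<le> u powr (-a)"
    using exp_ge_add_one_self[of "-a * ln u"] u by (simp add: powr_def)
  moreover have "a * ln u \<le> a * (u - 1)"
    using u assms by (intro mult_left_mono ln_le_minus_one) auto
  ultimately have "(1 + a) - a * u \<le> u powr (-a)" by (simp add: algebra_simps)
  have "s powr (-a) * (1 + a) - a * s powr (-a-1) * t = s powr (-a) * ((1 + a) - a * u)"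
    using assms by (simp add: t powr_diff algebra_simps)
  also have "\<dots> \<le> s powr (-a) * u powr (-a)"
    using \<open>(1 + a) - a * u \<le> u powr (-a)\<close> by (simp add: mult_left_mono)
  also have "\<dots> = t powr (-a)"
    using assms u by (simp add: t powr_mult)
  finally show ?thesis .
qed

lemma integral_le_nn_integral:
  fixes f :: "'b \<Rightarrow> real"
  assumes "integrable M f"
  shows "ennreal (integral\<^sup>L M f) \<le> (\<integral>\<^sup>+x. ennreal (f x) \<partial>M)"
proof (cases "(\<integral>\<^sup>+x. ennreal (f x) \<partial>M) = \<infinity>")
  case False
  then obtain r where r: "0 \<le> r" "(\<integral>\<^sup>+x. ennreal (f x) \<partial>M) = ennreal r"
    using ennreal_cases[of "\<integral>\<^sup>+x. ennreal (f x) \<partial>M"] by auto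
  then have "integral\<^sup>L M f \<le> r" by (intro integral_real_bounded) auto
  then show ?thesis using r by (simp add: ennreal_leI)
qed simp

lemma dual_weight_integral_ge_tangent:
  fixes w :: "'a::euclidean_space \<Rightarrow> real" and q :: real
  defines "a \<equiv> 1 / (q - 1)"
  assumes W: "is_weight w" and q: "1 < q" and s: "0 < s"
    and fin: "dual_weight_integral q w (ball c r) < \<infinity>"
  shows "measure lebesgue (ball c r) * s powr (-a) * (1 + a) - a * s powr (-a-1) * wmeas w (ball c r)
           \<le> enn2real (dual_weight_integral q w (ball c r))"
proof -
  let ?B = "ball c r"
  define h where "h y = s powr (-a) * (1 + a) - a * s powr (-a-1) * w y" for y
  have a: "0 < a" and neg_a: "- 1 / (q - 1) = -a" using q by (simp_all add: a_def)
  have "set_integrable lebesgue ?B h"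
    unfolding h_def using is_weight_set_integrable_ball[OF W, of c r]
    by (intro set_integral_diff(1) set_integrable_const_ball set_integrable_mult_right)
  then have int: "integrable lebesgue (\<lambda>y. indicator ?B y * h y)"
    by (simp add: set_integrable_def)
  have "(\<integral>y\<in>?B. h y \<partial>lebesgue)
      = measure lebesgue ?B * s powr (-a) * (1 + a) - a * s powr (-a-1) * wmeas w ?B"
    unfolding h_def wmeas_def
    using is_weight_set_integrable_ball[OF W, of c r] emeasure_lebesgue_ball_finite[of c r]
    by (subst set_integral_diff(2))
       (auto intro: set_integrable_const_ball set_integrable_mult_right
             simp: set_integral_const algebra_simps)
  then have "ennreal (measure lebesgue ?B * s powr (-a) * (1 + a) - a * s powr (-a-1) * wmeas w ?B)
      \<le> (\<integral>\<^sup>+y. ennreal (indicator ?B y * h y) \<partial>lebesgue)"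
    using integral_le_nn_integral[OF int] by (simp add: set_lebesgue_integral_def ac_simps)
  also have "\<dots> \<le> dual_weight_integral q w ?B"
    unfolding dual_weight_integral_def neg_a
  proof (intro nn_integral_mono)
    fix y
    have "h y \<le> w y powr (-a)" if "w y \<noteq> 0"
      using that W tangent_le_powr_neg[OF a s] unfolding h_def is_weight_def
      by (metis less_eq_real_def)
    then show "ennreal (indicator ?B y * h y)
        \<le> indicator ?B y * (if w y = 0 then \<infinity> else ennreal (w y powr (-a)))"
      by (auto simp: indicator_def ennreal_leI)
  qed
  also have "\<dots> = ennreal (enn2real (dual_weight_integral q w ?B))"
    using fin by simp
  finally show ?thesis
    using enn2real_nonneg[of "dual_weight_integral q w ?B"] by (auto simp: ennreal_le_iff2)
qed

(* If w(B) = 0 the tangent bound grows without limit as s tends to 0. *)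
lemma wmeas_ball_pos_of_dual_weight_integral_finite:
  fixes w :: "'a::euclidean_space \<Rightarrow> real"
  assumes W: "is_weight w" and q: "1 < q" and r: "0 < r"
    and fin: "dual_weight_integral q w (ball c r) < \<infinity>"
  shows "0 < wmeas w (ball c r)"
proof (rule ccontr)
  define a where "a = 1 / (q - 1)"
  define m where "m = measure lebesgue (ball c r)"
  define I where "I = enn2real (dual_weight_integral q w (ball c r))"
  assume "\<not> 0 < wmeas w (ball c r)"
  then have om: "wmeas w (ball c r) = 0" using wmeas_nonneg[OF W, of "ball c r"] by simp
  have a: "0 < a" "(q - 1) * a = 1" using q by (simp_all add: a_def)
  have m: "0 < m" using measure_lebesgue_ball_pos[OF r] by (simp add: m_def)
  have I: "0 \<le> I" by (simp add: I_def)
  define t where "t = (I + 1) / m"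
  have t: "0 < t" using m I by (simp add: t_def)
  have "(t powr (-(q - 1))) powr (-a) = t"
    using t a by (simp add: powr_powr algebra_simps)
  then have "m * t * (1 + a) \<le> I"
    using dual_weight_integral_ge_tangent[OF W q _ fin, of "t powr (-(q - 1))"] t om
    by (simp add: m_def I_def a_def)
  moreover have "m * t = I + 1" using m by (simp add: t_def)
  ultimately have "(I + 1) * (1 + a) \<le> I" by simp
  moreover have "0 \<le> I * a" using a I by simp
  ultimately show False using a by (simp add: algebra_simps)
qed

(* Hoelder's inequality, obtained from the tangent bound at s = w(B)/|B|. *)
lemma measure_ball_powr_le_wmeas_dual_weight_integral:
  fixes w :: "'a::euclidean_space \<Rightarrow> real"
  assumes W: "is_weight w" and q: "1 < q" and r: "0 < r"
    and fin: "dual_weight_integral q w (ball c r) < \<infinity>"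
  shows "measure lebesgue (ball c r) powr q
           \<le> wmeas w (ball c r) * enn2real (dual_weight_integral q w (ball c r)) powr (q - 1)"
proof -
  define a where "a = 1 / (q - 1)"
  define m where "m = measure lebesgue (ball c r)"
  define om where "om = wmeas w (ball c r)"
  define I where "I = enn2real (dual_weight_integral q w (ball c r))"
  define s where "s = om / m"
  have a: "(q - 1) * a = 1" using q by (simp add: a_def)
  have m: "0 < m" using measure_lebesgue_ball_pos[OF r] by (simp add: m_def)
  have om: "0 < om"
    using wmeas_ball_pos_of_dual_weight_integral_finite[OF W q r fin] by (simp add: om_def)
  have s: "0 < s" using om m by (simp add: s_def)
  have "s powr (-a-1) * om = s powr (-a) * m"
    using s m om by (simp add: powr_diff s_def)
  then have "m * s powr (-a) \<le> I"
    using dual_weight_integral_ge_tangent[OF W q s fin]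
    by (simp add: m_def om_def I_def a_def algebra_simps)
  then have "(m * s powr (-a)) powr (q - 1) \<le> I powr (q - 1)"
    using m s q by (intro powr_mono2) auto
  also have "(m * s powr (-a)) powr (q - 1) = m powr (q - 1) * s powr (- 1)"
    using m s a by (simp add: powr_mult powr_powr mult.commute)
  also have "\<dots> = m powr q / om"
    using m om by (simp add: s_def powr_minus powr_diff)
  finally show ?thesis using om by (simp add: m_def om_def I_def divide_le_eq mult.commute)
qed

lemma wmeas_ball_growth_of_A_q_bound:
  fixes w :: "'a::euclidean_space \<Rightarrow> real"
  assumes W: "is_weight w" and q: "1 < q" and r: "0 < r" "r \<le> R"
    and fin: "dual_weight_integral q w (ball c R) < \<infinity>"
    and bound: "measure lebesgue (ball c R) powr (- q) * wmeas w (ball c R)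
                  * enn2real (dual_weight_integral q w (ball c R)) powr (q - 1) \<le> K"
  shows "wmeas w (ball c R) \<le> K * (R / r) powr (real DIM('a) * q) * wmeas w (ball c r)"
proof -
  define m where "m = measure lebesgue (ball c r)"
  define m' where "m' = measure lebesgue (ball c R)"
  define om where "om = wmeas w (ball c r)"
  define om' where "om' = wmeas w (ball c R)"
  define I where "I = dual_weight_integral q w (ball c r)"
  define I' where "I' = dual_weight_integral q w (ball c R)"
  have m: "0 < m" "0 < m'" using measure_lebesgue_ball_pos r by (auto simp: m_def m'_def)
  have om: "0 \<le> om" "0 \<le> om'" using wmeas_nonneg[OF W] by (auto simp: om_def om'_def)
  have "I \<le> I'"
    unfolding I_def I'_def dual_weight_integral_def using r
    by (intro nn_integral_mono) (auto split: split_indicator)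
  with fin have I: "I < \<infinity>" "enn2real I \<le> enn2real I'"
    by (auto simp: I'_def enn2real_mono intro: le_less_trans)
  have "m powr q * om' \<le> (om * enn2real I powr (q - 1)) * om'"
    using measure_ball_powr_le_wmeas_dual_weight_integral[OF W q r(1), of c] I om
    by (intro mult_right_mono) (auto simp: m_def om_def I_def)
  also have "\<dots> \<le> om * (om' * enn2real I' powr (q - 1))"
    using I q om by (auto simp: ac_simps intro!: mult_left_mono powr_mono2)
  also have "om' * enn2real I' powr (q - 1) \<le> K * m' powr q"
    using bound m by (simp add: m'_def om'_def I'_def powr_minus field_simps)
  finally have "m powr q * om' \<le> om * (K * m' powr q)"
    using om by (simp add: mult_left_mono)
  then have "om' \<le> K * (m' / m) powr q * om"
    using m by (simp add: powr_divide pos_le_divide_eq mult.commute mult.left_commute)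
  also have "(m' / m) powr q = (R / r) powr (real DIM('a) * q)"
    using m r measure_lebesgue_ball_ratio[OF r, of c]
    by (simp add: m_def m'_def powr_realpow[symmetric] powr_powr)
  finally show ?thesis by (simp add: om_def om'_def)
qed

lemma A_q_weight_ball_growth:
  fixes w :: "'a::euclidean_space \<Rightarrow> real"
  assumes Aq: "A_q q w" and q: "1 < q"
  obtains K where "weight_ball_growth K (real DIM('a) * q) w"
proof -
  have W: "is_weight w" using Aq unfolding A_q_def by auto
  obtain K where K: "\<And>c r. 0 < r \<Longrightarrow> dual_weight_integral q w (ball c r) < \<infinity> \<and>
      measure lebesgue (ball c r) powr (- q) * wmeas w (ball c r)
        * enn2real (dual_weight_integral q w (ball c r)) powr (q - 1) \<le> K"
    using Aq unfolding A_q_def dual_weight_integral_def Let_def by blast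
  have "weight_ball_growth K (real DIM('a) * q) w"
    unfolding weight_ball_growth_def
  proof (intro allI impI)
    fix c :: 'a and r R :: real
    show "wmeas w (ball c R) \<le> K * (R / r) powr (real DIM('a) * q) * wmeas w (ball c r)"
      if "0 < r" "r \<le> R"
      using K[of R c] that by (intro wmeas_ball_growth_of_A_q_bound[OF W q]) auto
  qed
  then show ?thesis by (rule that)
qed

lemma A_infty_weight_ball_growth:
  fixes w :: "'a::euclidean_space \<Rightarrow> real"
  assumes "A_infty w"
  obtains K e where "0 \<le> e" "weight_ball_growth K e w"
proof -
  consider "A_1 w" | q where "1 < q" "A_q q w" using assms unfolding A_infty_def by blast
  then show ?thesis
  proof cases
    case 1
    then show ?thesis using A_1_weight_ball_growth that by (metis of_nat_0_le_iff)
  next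
    case 2
    then obtain K where "weight_ball_growth K (real DIM('a) * q) w"
      using A_q_weight_ball_growth by blast
    moreover have "0 \<le> real DIM('a) * q" using \<open>1 < q\<close> by simp
    ultimately show ?thesis using that by blast
  qed
qed

section \<open>Log-Hoelder exponents on balls\<close>

lemma one_le_ln_exp1_add: "0 \<le> y \<Longrightarrow> 1 \<le> ln (exp 1 + (y::real))"
  using ln_le_cancel_iff[of "exp 1" "exp 1 + y"] by (simp add: add_pos_nonneg)

lemma mult_ln_one_add_double_le:
  fixes d y c :: real
  assumes "0 \<le> y" "0 \<le> d" "d * ln (exp 1 + y) \<le> c"
  shows "d * ln (1 + 2 * y) \<le> 2 * c"
proof -
  define X where "X = ln (exp 1 + y)"
  have pos: "0 < exp 1 + y" using assms(1) by (simp add: add_pos_nonneg)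
  have X: "1 \<le> X" unfolding X_def using assms(1) by (rule one_le_ln_exp1_add)
  have "ln (1 + 2 * y) \<le> ln (2 * (exp 1 + y))"
    using assms(1) exp_ge_add_one_self[of 1]
    by (subst ln_le_cancel_iff) (auto intro: add_pos_nonneg)
  also have "\<dots> = ln 2 + X"
    unfolding X_def using ln_mult[of 2 "exp 1 + y"] pos by simp
  also have "\<dots> \<le> 2 * X" using ln_2_less_1 X by simp
  finally have "d * ln (1 + 2 * y) \<le> d * (2 * X)" using assms(2) by (rule mult_left_mono)
  then show ?thesis using assms(3) by (simp add: X_def)
qed

lemma mult_ln_ball_ratio_le:
  fixes r n d c1 c2 :: real
  assumes r: "0 < r" and n: "0 \<le> n" and d: "0 \<le> d" "d \<le> 1" and c2: "0 \<le> c2"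
    and local: "d * ln (exp 1 + 1 / (2 * r)) \<le> c1"
    and decay: "2 * r + 1 < n \<Longrightarrow> d * ln (exp 1 + n / 2) \<le> c2"
  shows "d * ln ((r + n + 1) / r) \<le> 2 + 2 * c1 + 2 * c2"
proof -
  have local': "d * ln (1 + 1 / r) \<le> 2 * c1"
    using mult_ln_one_add_double_le[OF _ d(1) local] r by simp
  have pos: "0 < (r + n + 1) / r" "0 < 1 + 1 / r" using r n by (simp_all add: add_pos_pos)
  show ?thesis
  proof (cases "2 * r + 1 < n")
    case True
    have decay': "d * ln (1 + n) \<le> 2 * c2"
      using mult_ln_one_add_double_le[OF _ d(1) decay[OF True]] n by simp
    have "(r + n + 1) / r \<le> (1 + 1 / r) * (1 + n)"
      using r n by (simp add: field_simps)
    then have "ln ((r + n + 1) / r) \<le> ln ((1 + 1 / r) * (1 + n))"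
      using pos n by simp
    also have "\<dots> = ln (1 + 1 / r) + ln (1 + n)"
      using pos n by (simp add: ln_mult)
    finally have "ln ((r + n + 1) / r) \<le> ln (1 + 1 / r) + ln (1 + n)" .
    then have "d * ln ((r + n + 1) / r) \<le> d * ln (1 + 1 / r) + d * ln (1 + n)"
      using d(1) by (simp add: mult_left_mono distrib_left[symmetric])
    then show ?thesis using local' decay' by linarith
  next
    case False
    have "r + n + 1 \<le> 3 * (r + 1)" using False by simp
    then have "(r + n + 1) / r \<le> 3 * (r + 1) / r"
      using r by (simp add: divide_right_mono)
    also have "\<dots> = 3 * (1 + 1 / r)"
      using r by (simp add: field_simps)
    finally have "(r + n + 1) / r \<le> 3 * (1 + 1 / r)" .
    then have "ln ((r + n + 1) / r) \<le> ln (3 * (1 + 1 / r))"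
      using pos by simp
    also have "\<dots> = ln 3 + ln (1 + 1 / r)"
      using pos ln_mult[of 3 "1 + 1 / r"] by simp
    also have "ln (3::real) \<le> 2"
      using ln_le_minus_one[of 3] by simp
    finally have "d * ln ((r + n + 1) / r) \<le> d * 2 + d * ln (1 + 1 / r)"
      using d(1) by (simp add: mult_left_mono distrib_left[symmetric])
    then show ?thesis using local' d c2 by linarith
  qed
qed

lemma abs_mult_ln_exp1_add_le:
  fixes d c s t :: real
  assumes "\<bar>d\<bar> \<le> c / ln (exp 1 + t)" "0 \<le> s" "s \<le> t"
  shows "\<bar>d\<bar> * ln (exp 1 + s) \<le> c"
proof -
  have "0 < exp 1 + s" using assms(2) by (simp add: add_pos_nonneg)
  then have "\<bar>d\<bar> * ln (exp 1 + s) \<le> \<bar>d\<bar> * ln (exp 1 + t)"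
    using assms(3) by (intro mult_left_mono) auto
  also have "\<dots> \<le> c"
    using assms(1) one_le_ln_exp1_add[of t] assms(2,3) by (simp add: pos_le_divide_eq)
  finally show ?thesis .
qed

lemma log_Holder_diff_mult_ln_le:
  fixes g :: "'a::real_normed_vector \<Rightarrow> real"
  assumes local: "\<And>x y. x \<in> S \<Longrightarrow> y \<in> S \<Longrightarrow> \<bar>g x - g y\<bar> \<le> c1 / ln (exp 1 + 1 / norm (x - y))"
    and c1: "0 \<le> c1" and x: "x \<in> ball c r \<inter> S" and y: "y \<in> ball c r \<inter> S"
  shows "(g x - g y) * ln (exp 1 + 1 / (2 * r)) \<le> c1"
proof (cases "x = y")
  case False
  have "dist c x < r" using x by simp
  then have r: "0 < r" using zero_le_dist[of c x] by linarith
  have "norm (x - y) < 2 * r"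
    using x y dist_triangle_less_add[of x c r y r] by (simp add: dist_norm norm_minus_commute)
  then have "\<bar>g x - g y\<bar> * ln (exp 1 + 1 / (2 * r)) \<le> c1"
    using local x y False r by (intro abs_mult_ln_exp1_add_le) (auto intro!: divide_left_mono)
  moreover have "0 \<le> ln (exp 1 + 1 / (2 * r))"
    using one_le_ln_exp1_add[of "1 / (2 * r)"] r by simp
  then have "(g x - g y) * ln (exp 1 + 1 / (2 * r)) \<le> \<bar>g x - g y\<bar> * ln (exp 1 + 1 / (2 * r))"
    by (intro mult_right_mono) auto
  ultimately show ?thesis by linarith
qed (simp add: c1)

lemma log_decay_diff_mult_ln_le:
  fixes g :: "'a::real_normed_vector \<Rightarrow> real"
  assumes decay: "\<And>x. x \<in> S \<Longrightarrow> \<bar>g x - g_inf\<bar> \<le> c2 / ln (exp 1 + norm x)"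
    and x: "x \<in> ball c r \<inter> S" and y: "y \<in> ball c r \<inter> S" and far: "2 * r \<le> norm c"
  shows "(g x - g y) * ln (exp 1 + norm c / 2) \<le> 2 * c2"
proof -
  let ?L = "ln (exp 1 + norm c / 2)"
  have bound: "\<bar>g z - g_inf\<bar> * ?L \<le> c2" if "z \<in> ball c r \<inter> S" for z
  proof (rule abs_mult_ln_exp1_add_le)
    show "\<bar>g z - g_inf\<bar> \<le> c2 / ln (exp 1 + norm z)" using decay that by simp
    show "norm c / 2 \<le> norm z"
      using that far norm_triangle_ineq2[of c z] by (simp add: dist_norm)
  qed simp
  have "0 \<le> ?L" using one_le_ln_exp1_add[of "norm c / 2"] by simp
  then have "(g x - g y) * ?L \<le> (\<bar>g x - g_inf\<bar> + \<bar>g y - g_inf\<bar>) * ?L"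
    by (intro mult_right_mono) auto
  also have "\<dots> \<le> 2 * c2" using bound[OF x] bound[OF y] by (simp add: distrib_right)
  finally show ?thesis .
qed

lemma P_log_ball_oscillation:
  fixes p :: "'a::euclidean_space \<Rightarrow> ereal"
  assumes "P_log \<Omega> p" "\<forall>x\<in>\<Omega>. 1 \<le> p x"
  obtains M where "\<And>c r x y. 0 < r \<Longrightarrow> x \<in> ball c r \<inter> \<Omega> \<Longrightarrow> y \<in> ball c r \<inter> \<Omega> \<Longrightarrow>
      (recip (p x) - recip (p y)) * ln ((r + norm c + 1) / r) \<le> M"
proof -
  obtain c1 where c1: "0 < c1" and local: "\<And>x y. x \<in> \<Omega> \<Longrightarrow> y \<in> \<Omega> \<Longrightarrow>
      \<bar>recip (p x) - recip (p y)\<bar> \<le> c1 / ln (exp 1 + 1 / norm (x - y))"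
    using assms(1) unfolding P_log_def by blast
  obtain p_inf c2 where c2: "0 < c2" and decay: "\<And>x. x \<in> \<Omega> \<Longrightarrow>
      \<bar>recip (p x) - recip p_inf\<bar> \<le> c2 / ln (exp 1 + norm x)"
    using assms(1) unfolding P_log_def by blast
  have "(recip (p x) - recip (p y)) * ln ((r + norm c + 1) / r) \<le> 2 + 2 * c1 + 2 * (2 * c2)"
    if r: "0 < r" and x: "x \<in> ball c r \<inter> \<Omega>" and y: "y \<in> ball c r \<inter> \<Omega>" for c r x y
  proof (cases "0 \<le> recip (p x) - recip (p y)")
    case True
    show ?thesis
    proof (rule mult_ln_ball_ratio_le[OF r norm_ge_zero True])
      show "recip (p x) - recip (p y) \<le> 1" using assms(2) x y by (intro recip_diff_le_one) auto
      show "(recip (p x) - recip (p y)) * ln (exp 1 + 1 / (2 * r)) \<le> c1"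
        using local less_imp_le[OF c1] x y by (rule log_Holder_diff_mult_ln_le)
      show "(recip (p x) - recip (p y)) * ln (exp 1 + norm c / 2) \<le> 2 * c2"
        if "2 * r + 1 < norm c"
      proof -
        have "2 * r \<le> norm c" using that by linarith
        with decay x y show ?thesis by (rule log_decay_diff_mult_ln_le)
      qed
    qed (use c2 in simp)
  next
    case False
    have "0 \<le> ln ((r + norm c + 1) / r)" using r by simp
    with False have "(recip (p x) - recip (p y)) * ln ((r + norm c + 1) / r) \<le> 0"
      by (simp add: mult_nonpos_nonneg)
    then show ?thesis using c1 c2 by simp
  qed
  then show ?thesis using that by blast
qed

lemma powr_le_max_one:
  fixes x d :: real
  assumes "0 < x" "0 \<le> d" "d \<le> 1"
  shows "x powr d \<le> max 1 x"
proof (cases "1 \<le> x")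
  case True
  then have "x powr d \<le> x powr 1" using assms by (intro powr_mono) auto
  then show ?thesis using assms by simp
next
  case False
  then have "x powr d \<le> 1 powr d" using assms by (intro powr_mono2) auto
  then show ?thesis by simp
qed

lemma powr_neg_le_of_growth:
  fixes om d a K \<rho> e M :: real
  assumes om: "0 \<le> om" and d: "0 \<le> d" "d \<le> 1" and a: "0 < a" "a \<le> K * \<rho> powr e * om"
    and \<rho>: "1 \<le> \<rho>" and e: "0 \<le> e" and M: "d * ln \<rho> \<le> M"
  shows "om powr (-d) \<le> max 1 (K / a) * exp (e * M)"
proof -
  have "0 \<le> d * ln \<rho>" using d \<rho> by simp
  then have "1 \<le> exp (e * M)" using M e by simp
  then have one_le: "1 \<le> max 1 (K / a) * exp (e * M)"
    using mult_mono[of 1 "max 1 (K / a)" 1 "exp (e * M)"] by simp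
  consider "om = 0" | "1 \<le> om" | "0 < om" "om < 1" using om by linarith
  then show ?thesis
  proof cases
    case 1
    then show ?thesis using one_le by simp
  next
    case 2
    then have "om powr (-d) \<le> om powr 0" using d by (intro powr_mono) auto
    then show ?thesis using 2 one_le by simp
  next
    case 3
    have K: "0 < K"
    proof (rule ccontr)
      assume "\<not> 0 < K"
      then have "K * \<rho> powr e * om \<le> 0" using 3 by (simp add: mult_nonpos_nonneg)
      then show False using a by simp
    qed
    have "om powr (-d) = (1 / om) powr d" using 3 by (simp add: powr_minus_divide powr_divide)
    also have "\<dots> \<le> (K / a * \<rho> powr e) powr d"
      using a 3 d by (intro powr_mono2) (auto simp: field_simps)
    also have "\<dots> = (K / a) powr d * \<rho> powr (e * d)"
      using K a \<rho> powr_mult[of "K / a" "\<rho> powr e" d] by (simp add: powr_powr)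
    also have "\<dots> = (K / a) powr d * exp (e * (d * ln \<rho>))"
      using \<rho> by (simp add: powr_def)
    also have "\<dots> \<le> max 1 (K / a) * exp (e * M)"
      using powr_le_max_one[of "K / a" d] K a d M e
      by (intro mult_mono) (auto intro: mult_left_mono)
    finally show ?thesis .
  qed
qed

theorem lemma5p4:
  fixes \<Omega> :: "'a::euclidean_space set" and p :: "'a \<Rightarrow> ereal" and w :: "'a \<Rightarrow> real"
  assumes "open \<Omega>"
    and "p \<in> borel_measurable (restrict_space lebesgue \<Omega>)"
    and "\<forall>x\<in>\<Omega>. 1 \<le> p x"
    and "P_log \<Omega> p"
    and "A_infty w"
  shows "\<exists>C. \<forall>c r. 0 < r \<longrightarrow> ball c r \<inter> \<Omega> \<noteq> {} \<longrightarrow>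
           wmeas w (ball c r) powr (recip (p_plus \<Omega> p (ball c r)) - recip (p_minus \<Omega> p (ball c r))) \<le> C"
proof -
  have W: "is_weight w" using assms(5) by (rule A_infty_is_weight)
  obtain K e where "0 \<le> e" and growth: "weight_ball_growth K e w"
    using A_infty_weight_ball_growth[OF assms(5)] .
  obtain M where osc: "\<And>c r x y. 0 < r \<Longrightarrow> x \<in> ball c r \<inter> \<Omega> \<Longrightarrow> y \<in> ball c r \<inter> \<Omega> \<Longrightarrow>
      (recip (p x) - recip (p y)) * ln ((r + norm c + 1) / r) \<le> M"
    using P_log_ball_oscillation[OF assms(4,3)] by blast
  define a where "a = wmeas w (ball 0 1)"
  have "wmeas w (ball c r) powr (recip (p_plus \<Omega> p (ball c r)) - recip (p_minus \<Omega> p (ball c r)))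
      \<le> max 1 (K / a) * exp (e * M)" if r: "0 < r" and ne: "ball c r \<inter> \<Omega> \<noteq> {}" for c r
  proof (cases "a = 0")
    case True
    then show ?thesis
      using weight_ball_growth_null_ball[OF W growth zero_less_one] by (simp add: a_def)
  next
    case False
    then have a: "0 < a" using wmeas_nonneg[OF W, of "ball 0 1"] by (simp add: a_def)
    have \<rho>: "1 < (r + norm c + 1) / r" using r by (simp add: add_nonneg_pos)
    then have "0 < ln ((r + norm c + 1) / r)" by simp
    note gap = recip_p_gap_bounds[OF assms(1-3) open_ball ne osc[where c=c, OF r] this]
    show ?thesis
      using powr_neg_le_of_growth[OF wmeas_nonneg[OF W] gap(1,2) a
          wmeas_unit_ball_le[OF W growth r, of c, folded a_def] less_imp_le[OF \<rho>] \<open>0 \<le> e\<close> gap(3)]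
      by simp
  qed
  then show ?thesis by blast
qed

end
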